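(* For every $c\in\mathbb{R}^m$, $$(b_\infty)^m\frac{\lambda(\|c\|)}{(2\pi)^{m/2}}\kappa_m\le \operatorname{vol}_m(G(c))\le\frac{\lambda(\|c\|)}{(2\pi)^{m/2}}\kappa_m,$$ where $\kappa_m$ is the volume of the unit ball of $\mathbb{R}^m$.
   Context: For an integrable random vector $X\in\mathbb{R}^m$, the Vitale zonoid $\mathbb{E}\underline{X}$ is the convex body with support function $h(u)=\frac12\mathbb{E}|\langle u,X\rangle|$ (where $h_K(u)=\sup_{x\in K}\langle u,x\rangle$). For $c\in\mathbb{R}^m$, $G(c):=\mathbb{E}\underline{c+\xi}$ with $\xi\in\mathbb{R}^m$ a standard Gaussian vector. $\operatorname{erf}(t)=\frac{2}{\sqrt\pi}\int_0^te^{-s^2}ds$; $\lambda(s)=e^{-s^2/2}+\sqrt{\pi/2}\,s\,\operatorname{erf}(s/\sqrt2)$; $\varphi_\infty(x,z)=|z|e^{-x^2/(\pi z^2)}+x\operatorname{erf}\left(\frac{x}{\sqrt\pi|z|}\right)$ (equal to $|x|$ at $z=0$); $b_\infty:=\min\{\varphi_\infty(\cos t,\sin t):t\in[0,2\pi]\}\approx0.91$. *)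

theory Defs
  imports "HOL-Analysis.Analysis"
begin

definition erf :: "real \<Rightarrow> real" where
  "erf t = 2 / sqrt pi * (LBINT s=0..t. exp (- (s\<^sup>2)))"

definition lam :: "real \<Rightarrow> real" where
  "lam s = exp (- (s\<^sup>2) / 2) + sqrt (pi / 2) * s * erf (s / sqrt 2)"

definition phi_inf :: "real \<Rightarrow> real \<Rightarrow> real" where
  "phi_inf x z = (if z = 0 then \<bar>x\<bar>
     else \<bar>z\<bar> * exp (- (x\<^sup>2) / (pi * z\<^sup>2)) + x * erf (x / (sqrt pi * \<bar>z\<bar>)))"

definition b_inf :: real where
  "b_inf = Inf ((\<lambda>t. phi_inf (cos t) (sin t)) ` {0..2*pi})"

definition std_gauss_density :: "'a::euclidean_space \<Rightarrow> real" where
  "std_gauss_density x = (2 * pi) powr (- real DIM('a) / 2) * exp (- (norm x)\<^sup>2 / 2)"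

text \<open>Vitale zonoid G(c) = E [c + xi]: the convex body whose support function is
  h(u) = 1/2 E|<u, c + xi>|, xi standard Gaussian.\<close>
definition G_support :: "'a::euclidean_space \<Rightarrow> 'a \<Rightarrow> real" where
  "G_support c u = (1/2) * (\<integral>x. \<bar>u \<bullet> (c + x)\<bar> * std_gauss_density x \<partial>lborel)"

definition G_zonoid :: "'a::euclidean_space \<Rightarrow> 'a set" where
  "G_zonoid c = {x. \<forall>u. u \<bullet> x \<le> G_support c u}"

end

theory Submission
  imports Defs "HOL-Probability.Probability" "HOL-Real_Asymp.Real_Asymp"
begin

text \<open>Since \<open>u \<bullet> \<xi>\<close> is normal with variance \<open>norm u\<^sup>2\<close> and
  \<open>E \<bar>s + N(0,1)\<bar> = sqrt (2 / pi) * lam s\<close>, the support function of \<open>G(c)\<close> is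
  \<open>norm u * lam s / sqrt (2 * pi)\<close> with \<open>s = u \<bullet> c / norm u\<close>.  The ellipsoid \<open>E\<close>, image of the
  unit ball under the self-adjoint map \<open>y \<mapsto> (y + \<mu> (y \<bullet> c) c) / sqrt (2 * pi)\<close> with
  \<open>\<mu> = (lam r - 1) / r\<^sup>2\<close> and \<open>r = norm c\<close>, has support function
  \<open>norm u * sqrt (1 + k r * s\<^sup>2) / sqrt (2 * pi)\<close>, where \<open>k r = (lam r\<^sup>2 - 1) / r\<^sup>2\<close>.
  As \<open>k\<close> increases to \<open>pi / 2\<close>, \<open>\<bar>s\<bar> \<le> r\<close> and \<open>b_inf * sqrt (1 + pi * s\<^sup>2 / 2) \<le> lam s\<close>,
  this gives \<open>b_inf E \<subseteq> G(c) \<subseteq> E\<close>.  Finally \<open>vol E = lam r * \<kappa>\<^sub>m / (2 * pi) ^ (m / 2)\<close>,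
  because the map stretches the direction of \<open>c\<close> by \<open>1 + \<mu> r\<^sup>2 = lam r\<close>.\<close>

section \<open>The error function and \<open>lam\<close>\<close>

lemma DERIV_erf: "(erf has_real_derivative 2 / sqrt pi * exp (- (t\<^sup>2))) (at t)"
proof -
  define R where "R = \<bar>t\<bar> + 1"
  have "continuous_on {-R..R} (\<lambda>y. exp (- (y\<^sup>2)))"
    by (intro continuous_intros)
  then have "((\<lambda>u. LBINT y=0..u. exp (- (y\<^sup>2))) has_vector_derivative exp (- (t\<^sup>2)))
          (at t within {-R..R})"
    using interval_integral_FTC2[of "-R" 0 R "\<lambda>y. exp (- (y\<^sup>2))" t]
    by (simp add: R_def zero_ereal_def)
  moreover have "at t within {-R..R} = at t"
    by (rule at_within_Icc_at) (auto simp: R_def)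
  ultimately show ?thesis
    unfolding erf_def[abs_def]
    by (intro DERIV_cmult) (simp add: has_real_derivative_iff_has_vector_derivative)
qed

lemma erf_0 [simp]: "erf 0 = 0"
  by (simp add: erf_def zero_ereal_def)

lemma erf_minus: "erf (- t) = - erf t"
proof -
  have "(LBINT y=0..-t. exp (- (y\<^sup>2))) = (LBINT y=t..0. exp (- ((-y)\<^sup>2)))"
    by (subst interval_integral_reflect) simp
  also have "\<dots> = - (LBINT y=0..t. exp (- (y\<^sup>2)))"
    by (simp add: interval_integral_endpoints_reverse[of t 0])
  finally show ?thesis by (simp add: erf_def)
qed

lemma erf_mono: "s \<le> t \<Longrightarrow> erf s \<le> erf t"
  by (rule DERIV_nonneg_imp_nondecreasing[of s t erf]) (auto intro!: exI DERIV_erf)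

lemma erf_nonneg: "0 \<le> t \<Longrightarrow> 0 \<le> erf t"
  using erf_mono[of 0 t] by simp

lemma erf_nonpos: "t \<le> 0 \<Longrightarrow> erf t \<le> 0"
  using erf_mono[of t 0] by simp

lemma mult_erf_nonneg: "0 \<le> c \<Longrightarrow> 0 \<le> x * erf (c * x)"
  by (cases "0 \<le> x")
     (simp_all add: erf_nonneg mult_nonpos_nonpos erf_nonpos mult_nonneg_nonpos)

lemma tendsto_erf_at_top: "(erf \<longlongrightarrow> 1) at_top"
proof -
  let ?I = "\<lambda>A. set_lebesgue_integral lborel A (\<lambda>x::real. exp (- (x\<^sup>2)))"
  have "set_integrable lborel {0..} (\<lambda>x::real. exp (- (x\<^sup>2)))"
    unfolding set_integrable_def using gaussian_moment_0 integrable.simps by blast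
  then have "((\<lambda>b. ?I {0..b}) \<longlongrightarrow> ?I {0..}) at_top"
    by (intro tendsto_set_lebesgue_integral_at_top) simp
  moreover have "?I {0..} = sqrt pi / 2"
    unfolding set_lebesgue_integral_def using gaussian_moment_0 by (rule has_bochner_integral_integral_eq)
  ultimately have "((\<lambda>b. 2 / sqrt pi * ?I {0..b}) \<longlongrightarrow> 2 / sqrt pi * (sqrt pi / 2)) at_top"
    by (intro tendsto_mult_left) simp
  moreover have "\<forall>\<^sub>F b in at_top. 2 / sqrt pi * ?I {0..b} = erf b"
    using eventually_ge_at_top[of 0]
    by eventually_elim (simp add: erf_def zero_ereal_def interval_integral_Icc)
  ultimately show ?thesis
    by (simp add: Lim_transform_eventually)
qed

lemma tendsto_erf_at_bot: "(erf \<longlongrightarrow> -1) at_bot"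
proof -
  have "((\<lambda>x. - erf (- x)) \<longlongrightarrow> - 1) at_bot"
    by (intro tendsto_minus filterlim_compose[OF tendsto_erf_at_top] filterlim_uminus_at_top_at_bot)
  then show ?thesis by (simp add: erf_minus)
qed

lemma erf_le_1: "erf t \<le> 1"
  by (intro tendsto_lowerbound[OF tendsto_erf_at_top] eventually_mono[OF eventually_ge_at_top[of t]]
      erf_mono) simp_all

definition dlam :: "real \<Rightarrow> real" where
  "dlam s = sqrt (pi / 2) * erf (s / sqrt 2)"

lemma lam_eq: "lam s = exp (- (s\<^sup>2) / 2) + s * dlam s"
  by (simp add: lam_def dlam_def)

lemma DERIV_dlam: "(dlam has_real_derivative exp (- (s\<^sup>2) / 2)) (at s)"
proof -
  have "(dlam has_real_derivative
          sqrt (pi / 2) * (2 / sqrt pi * exp (- ((s / sqrt 2)\<^sup>2)) * (1 / sqrt 2))) (at s)"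
    unfolding dlam_def[abs_def]
    by (rule DERIV_cmult[OF DERIV_chain2[OF DERIV_erf DERIV_cdivide[OF DERIV_ident]]])
  then show ?thesis
    by (simp add: power_divide real_sqrt_divide)
qed

lemma DERIV_lam: "(lam has_real_derivative dlam s) (at s)"
proof -
  have "((\<lambda>s. exp (- (s\<^sup>2) / 2) + s * dlam s) has_real_derivative
          - s * exp (- (s\<^sup>2) / 2) + (dlam s + s * exp (- (s\<^sup>2) / 2))) (at s)"
    by (auto intro!: derivative_eq_intros DERIV_dlam simp: power2_eq_square)
  then show ?thesis
    by (simp add: lam_eq[abs_def])
qed

lemma lam_0 [simp]: "lam 0 = 1"
  by (simp add: lam_def)

lemma dlam_0 [simp]: "dlam 0 = 0"
  by (simp add: dlam_def)

lemma dlam_nonneg: "0 \<le> s \<Longrightarrow> 0 \<le> dlam s"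
  by (simp add: dlam_def erf_nonneg)

lemma lam_minus: "lam (- s) = lam s"
  by (simp add: lam_def erf_minus)

lemma lam_abs: "lam \<bar>s\<bar> = lam s"
  by (cases "0 \<le> s") (auto simp: lam_minus)

lemma lam_ge_1: "1 \<le> lam s"
proof -
  have "lam 0 \<le> lam \<bar>s\<bar>"
    by (rule DERIV_nonneg_imp_nondecreasing) (auto intro!: exI DERIV_lam dlam_nonneg)
  then show ?thesis by (simp add: lam_abs)
qed

lemma lam_pos: "0 < lam s"
  using lam_ge_1[of s] by simp

lemma dlam_le_mult_lam:
  assumes "0 \<le> s" shows "dlam s \<le> s * lam s"
proof -
  have "(\<lambda>s. s * lam s - dlam s) 0 \<le> (\<lambda>s. s * lam s - dlam s) s"
  proof (rule DERIV_nonneg_imp_nondecreasing[OF assms])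
    fix x :: real assume "0 \<le> x"
    have "((\<lambda>s. s * lam s - dlam s) has_real_derivative
        lam x + x * dlam x - exp (- (x\<^sup>2) / 2)) (at x)"
      by (auto intro!: derivative_eq_intros DERIV_lam DERIV_dlam)
    then show "\<exists>y. ((\<lambda>s. s * lam s - dlam s) has_real_derivative y) (at x) \<and> 0 \<le> y"
      using dlam_nonneg[of x] \<open>0 \<le> x\<close>
      by (intro exI[of _ "lam x + x * dlam x - exp (- (x\<^sup>2) / 2)"] conjI) (auto simp: lam_eq)
  qed
  then show ?thesis by simp
qed

lemma lam_sq_le_dlam:
  assumes "0 \<le> s" shows "(lam s)\<^sup>2 \<le> 1 + s * lam s * dlam s"
proof -
  let ?H = "\<lambda>s. 1 + s * lam s * dlam s - (lam s)\<^sup>2"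
  have "?H 0 \<le> ?H s"
  proof (rule DERIV_nonneg_imp_nondecreasing[OF assms])
    fix x :: real assume "0 \<le> x"
    have "(?H has_real_derivative (lam x + x * dlam x) * dlam x
            + x * lam x * exp (- (x\<^sup>2) / 2) - 2 * lam x * dlam x) (at x)"
      by (auto intro!: derivative_eq_intros DERIV_lam DERIV_dlam simp: power2_eq_square)
    moreover have "(lam x + x * dlam x) * dlam x + x * lam x * exp (- (x\<^sup>2) / 2)
            - 2 * lam x * dlam x = exp (- (x\<^sup>2) / 2) * (x * lam x - dlam x)"
      by (simp add: lam_eq algebra_simps)
    ultimately show "\<exists>y. (?H has_real_derivative y) (at x) \<and> 0 \<le> y"
      using dlam_le_mult_lam[OF \<open>0 \<le> x\<close>] by auto
  qed
  then show ?thesis by simp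
qed

definition lam_growth :: "real \<Rightarrow> real" where
  "lam_growth r = ((lam r)\<^sup>2 - 1) / r\<^sup>2"

lemma lam_growth_mono:
  assumes "0 < s" "s \<le> r" shows "lam_growth s \<le> lam_growth r"
  unfolding lam_growth_def
proof (rule DERIV_nonneg_imp_nondecreasing[OF assms(2)])
  fix x :: real assume "s \<le> x"
  then have "0 < x" using assms by simp
  have "((\<lambda>s. ((lam s)\<^sup>2 - 1) / s\<^sup>2) has_real_derivative
      ((2 * lam x * dlam x) * x\<^sup>2 - ((lam x)\<^sup>2 - 1) * (2 * x)) / (x\<^sup>2 * x\<^sup>2)) (at x)"
    using \<open>0 < x\<close> by (auto intro!: derivative_eq_intros DERIV_lam simp: power2_eq_square)
  moreover have "((2 * lam x * dlam x) * x\<^sup>2 - ((lam x)\<^sup>2 - 1) * (2 * x)) / (x\<^sup>2 * x\<^sup>2)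
      = 2 * (1 + x * lam x * dlam x - (lam x)\<^sup>2) / x ^ 3"
    using \<open>0 < x\<close> by (simp add: field_simps power2_eq_square power3_eq_cube)
  ultimately show "\<exists>y. ((\<lambda>s. ((lam s)\<^sup>2 - 1) / s\<^sup>2) has_real_derivative y) (at x) \<and> 0 \<le> y"
    using lam_sq_le_dlam[of x] \<open>0 < x\<close> by auto
qed

lemma lam_sq_le_lam_growth:
  assumes "\<bar>s\<bar> \<le> r" shows "(lam s)\<^sup>2 \<le> 1 + lam_growth r * s\<^sup>2"
proof (cases "s = 0")
  case False
  then have "lam_growth \<bar>s\<bar> * s\<^sup>2 \<le> lam_growth r * s\<^sup>2"
    using lam_growth_mono[of "\<bar>s\<bar>" r] assms by (simp add: mult_right_mono)
  moreover have "lam_growth \<bar>s\<bar> * s\<^sup>2 = (lam s)\<^sup>2 - 1"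
    using False by (simp add: lam_growth_def lam_abs)
  ultimately show ?thesis by simp
qed simp

text \<open>Since \<open>lam t \<le> 1 + sqrt (pi / 2) * t\<close>, the increasing function \<open>lam_growth\<close> is bounded by
  the limit of \<open>(1 / t + sqrt (pi / 2))\<^sup>2\<close>.\<close>
lemma lam_growth_le_pi_half: "lam_growth r \<le> pi / 2"
proof -
  have bound: "lam_growth r \<le> (1 / t + sqrt (pi / 2))\<^sup>2" if "0 < r" "r \<le> t" for r t
  proof -
    have "0 < t" using that by simp
    have "sqrt (pi / 2) * t * erf (t / sqrt 2) \<le> sqrt (pi / 2) * t"
      using \<open>0 < t\<close> by (intro mult_left_le erf_le_1) simp
    moreover have "exp (- (t\<^sup>2) / 2) \<le> 1"
      by simp
    ultimately have "lam t \<le> 1 + sqrt (pi / 2) * t"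
      unfolding lam_def by linarith
    then have "(lam t)\<^sup>2 / t\<^sup>2 \<le> (1 + sqrt (pi / 2) * t)\<^sup>2 / t\<^sup>2"
      using lam_pos[of t] by (intro divide_right_mono power_mono) auto
    moreover have "lam_growth r \<le> lam_growth t"
      using lam_growth_mono that by blast
    moreover have "lam_growth t \<le> (lam t)\<^sup>2 / t\<^sup>2"
      by (simp add: lam_growth_def divide_right_mono)
    moreover have "(1 + sqrt (pi / 2) * t)\<^sup>2 / t\<^sup>2 = (1 / t + sqrt (pi / 2))\<^sup>2"
      using \<open>0 < t\<close> by (simp add: field_simps power2_eq_square)
    ultimately show ?thesis by linarith
  qed
  have lim: "((\<lambda>t. (1 / t + sqrt (pi / 2))\<^sup>2) \<longlongrightarrow> (sqrt (pi / 2))\<^sup>2) at_top"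
    by real_asymp
  have "lam_growth \<bar>r\<bar> \<le> (sqrt (pi / 2))\<^sup>2" if "r \<noteq> 0"
    using that by (intro tendsto_lowerbound[OF lim] eventually_mono[OF eventually_ge_at_top[of "\<bar>r\<bar>"]]
        bound) simp_all
  then show ?thesis
    by (cases "r = 0") (auto simp: lam_growth_def lam_abs)
qed

lemma phi_inf_nonneg: "0 \<le> phi_inf x z"
  using mult_erf_nonneg[of "1 / (sqrt pi * \<bar>z\<bar>)" x] by (simp add: phi_inf_def)

lemma b_inf_nonneg: "0 \<le> b_inf"
  unfolding b_inf_def by (rule cInf_greatest) (auto simp: phi_inf_nonneg)

text \<open>The point \<open>(cos \<tau>, sin \<tau>)\<close> proportional to \<open>(sqrt (pi / 2) * s, 1)\<close> gives
  \<open>phi_inf (cos \<tau>) (sin \<tau>) = lam s / sqrt (1 + pi * s\<^sup>2 / 2)\<close>.\<close>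
lemma b_inf_mult_le_lam: "b_inf * sqrt (1 + pi * s\<^sup>2 / 2) \<le> lam s"
proof -
  define q where "q = sqrt (1 + pi * s\<^sup>2 / 2)"
  have pos: "0 < 1 + pi * s\<^sup>2 / 2"
    by (simp add: add_pos_nonneg)
  then have "0 < q" and qq: "q\<^sup>2 = 1 + pi * s\<^sup>2 / 2"
    by (simp_all add: q_def)
  define x where "x = sqrt (pi / 2) * s / q"
  define z where "z = 1 / q"
  have "0 < z" using \<open>0 < q\<close> by (simp add: z_def)
  have "x\<^sup>2 + z\<^sup>2 = ((sqrt (pi / 2))\<^sup>2 * s\<^sup>2 + 1) / q\<^sup>2"
    by (simp add: x_def z_def power_divide power_mult_distrib add_divide_distrib)
  with pos qq have "x\<^sup>2 + z\<^sup>2 = 1"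
    by simp
  then have "\<bar>x\<bar> \<le> 1"
    by (metis abs_le_square_iff abs_one le_add_same_cancel1 one_power2 zero_le_power2)
  define \<tau> where "\<tau> = arccos x"
  have cos: "cos \<tau> = x" using \<open>\<bar>x\<bar> \<le> 1\<close> by (simp add: \<tau>_def cos_arccos_abs)
  have "sin \<tau> = sqrt (1 - x\<^sup>2)" using \<open>\<bar>x\<bar> \<le> 1\<close> by (simp add: \<tau>_def sin_arccos_abs)
  also have "1 - x\<^sup>2 = z\<^sup>2"
    using \<open>x\<^sup>2 + z\<^sup>2 = 1\<close> by simp
  finally have sin: "sin \<tau> = z"
    using \<open>0 < z\<close> by simp
  have "-1 \<le> x" "x \<le> 1"
    using \<open>\<bar>x\<bar> \<le> 1\<close> by auto
  then have "\<tau> \<in> {0..2*pi}"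
    using arccos_lbound arccos_ubound pi_gt_zero by (force simp: \<tau>_def)
  then have "b_inf \<le> phi_inf (cos \<tau>) (sin \<tau>)"
    unfolding b_inf_def by (intro cInf_lower bdd_belowI[of _ 0]) (auto simp: phi_inf_nonneg)
  also have "\<dots> = z * lam s"
    using \<open>0 < z\<close> \<open>0 < q\<close>
    by (simp add: cos sin phi_inf_def lam_def x_def z_def power_divide power_mult_distrib
        real_sqrt_divide field_simps)
  finally show ?thesis
    using \<open>0 < q\<close> by (simp add: z_def q_def field_simps)
qed

lemma b_inf_sq_mult_le_lam_sq: "b_inf\<^sup>2 * (1 + lam_growth r * s\<^sup>2) \<le> (lam s)\<^sup>2"
proof -
  have "b_inf\<^sup>2 * (1 + lam_growth r * s\<^sup>2) \<le> b_inf\<^sup>2 * (1 + pi * s\<^sup>2 / 2)"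
    using mult_right_mono[OF lam_growth_le_pi_half[of r], of "s\<^sup>2"] by (intro mult_left_mono) auto
  also have "\<dots> = (b_inf * sqrt (1 + pi * s\<^sup>2 / 2))\<^sup>2"
    by (simp add: power_mult_distrib add_nonneg_nonneg)
  also have "\<dots> \<le> (lam s)\<^sup>2"
    using b_inf_mult_le_lam[of s] b_inf_nonneg by (intro power_mono) auto
  finally show ?thesis .
qed

section \<open>Gaussian integrals\<close>

lemma DERIV_std_normal_density:
  "(std_normal_density has_real_derivative - t * std_normal_density t) (at t)"
proof -
  have "std_normal_density = (\<lambda>t. 1 / sqrt (2 * pi) * exp (- t\<^sup>2 / 2))"
    by (rule ext) (simp add: std_normal_density_def)
  moreover have "((\<lambda>t. 1 / sqrt (2 * pi) * exp (- t\<^sup>2 / 2)) has_real_derivative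
      1 / sqrt (2 * pi) * (exp (- t\<^sup>2 / 2) * (- t))) (at t)"
    by (intro DERIV_cmult) (auto intro!: derivative_eq_intros simp: power2_eq_square)
  ultimately show ?thesis
    by (simp add: algebra_simps)
qed

lemma DERIV_erf_half:
  "((\<lambda>t. erf (t / sqrt 2) / 2) has_real_derivative std_normal_density t) (at t)"
proof -
  have "((\<lambda>t. erf (t / sqrt 2) / 2) has_real_derivative
          (2 / sqrt pi * exp (- ((t / sqrt 2)\<^sup>2)) * (1 / sqrt 2)) / 2) (at t)"
    by (rule DERIV_cdivide[OF DERIV_chain2[OF DERIV_erf DERIV_cdivide[OF DERIV_ident]]])
  then show ?thesis
    by (simp add: std_normal_density_def power_divide real_sqrt_mult mult.commute)
qed

lemma integrable_std_normal_affine: "integrable lborel (\<lambda>t. std_normal_density t * (s + t))"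
  unfolding distrib_left using integrable_std_normal_moment[of 1]
  by (intro Bochner_Integration.integrable_add) (auto intro: integrable_mult_right)

lemma integral_std_normal_affine_below:
  "(\<integral>t. indicator {..<x} t * (std_normal_density t * (s + t)) \<partial>lborel)
     = s * (1 + erf (x / sqrt 2)) / 2 - std_normal_density x"
proof -
  define f where "f t = std_normal_density t * (s + t)" for t
  define F where "F t = s * (erf (t / sqrt 2) / 2) - std_normal_density t" for t
  have "integrable lborel f"
    unfolding f_def by (rule integrable_std_normal_affine)
  have "set_integrable lborel (einterval (-\<infinity>) (ereal x)) f"
    unfolding set_integrable_def
    by (rule integrable_mult_indicator) (simp_all add: \<open>integrable lborel f\<close>)
  moreover have "(F has_real_derivative f t) (at t)" for t
    using DERIV_diff[OF DERIV_cmult[OF DERIV_erf_half] DERIV_std_normal_density, of s t]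
    by (simp add: F_def[abs_def] f_def algebra_simps)
  moreover have "isCont f t" for t
    unfolding f_def std_normal_density_def by (intro continuous_intros) simp_all
  moreover have "((F \<circ> real_of_ereal) \<longlongrightarrow> s * (-1 / 2) - 0) (at_right (-\<infinity>))"
  proof -
    have "((\<lambda>x. erf (x / sqrt 2)) \<longlongrightarrow> -1) at_bot"
      by (rule filterlim_compose[OF tendsto_erf_at_bot]) real_asymp
    moreover have "(std_normal_density \<longlongrightarrow> 0) at_bot"
      unfolding std_normal_density_def by real_asymp
    ultimately show ?thesis
      unfolding ereal_tendsto_simps F_def[abs_def]
      by (intro tendsto_intros) simp_all
  qed
  moreover have "((F \<circ> real_of_ereal) \<longlongrightarrow> F x) (at_left (ereal x))"
    unfolding ereal_tendsto_simps using DERIV_isCont[OF \<open>(F has_real_derivative f x) (at x)\<close>]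
    by (simp add: isCont_def filterlim_at_split)
  ultimately have "(LBINT t=-\<infinity>..ereal x. f t) = F x - s * (-1 / 2)"
    by (intro interval_integral_FTC_integrable)
       (auto simp: has_real_derivative_iff_has_vector_derivative[symmetric])
  then show ?thesis
    by (simp add: interval_lebesgue_integral_def set_lebesgue_integral_def einterval_def
        lessThan_def F_def f_def algebra_simps)
qed

lemma integral_std_normal_abs_shift:
  "(\<integral>t. std_normal_density t * \<bar>s + t\<bar> \<partial>lborel) = sqrt (2 / pi) * lam s"
proof -
  define f where "f t = std_normal_density t * (s + t)" for t
  have int_f: "integrable lborel f"
    unfolding f_def by (rule integrable_std_normal_affine)
  have "(\<integral>t. f t \<partial>lborel)
      = (\<integral>t. s * std_normal_density t \<partial>lborel) + (\<integral>t. std_normal_density t * t ^ 1 \<partial>lborel)"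
    unfolding f_def distrib_left using integrable_std_normal_moment[of 1]
    by (subst Bochner_Integration.integral_add[symmetric]) (auto simp: mult.commute)
  also have "\<dots> = s"
    using integral_std_normal_moment_odd[of 0] by simp
  finally have "(\<integral>t. f t \<partial>lborel) = s" .
  moreover have "std_normal_density t * \<bar>s + t\<bar> = f t - 2 * (indicator {..<-s} t * f t)" for t
    by (auto simp: f_def indicator_def algebra_simps)
  ultimately have "(\<integral>t. std_normal_density t * \<bar>s + t\<bar> \<partial>lborel)
      = s - 2 * (\<integral>t. indicator {..<-s} t * f t \<partial>lborel)"
    using int_f by (simp add: integrable_mult_indicator[of _ _ f, simplified])
  also have "\<dots> = 2 * std_normal_density s + s * erf (s / sqrt 2)"
    unfolding f_def integral_std_normal_affine_below
    by (simp add: erf_minus std_normal_density_def right_diff_distrib diff_divide_distrib)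
  also have "\<dots> = sqrt (2 / pi) * lam s"
    by (simp add: lam_def std_normal_density_def real_sqrt_mult real_sqrt_divide field_simps)
  finally show ?thesis .
qed

abbreviation std_normal_measure :: "real measure" where
  "std_normal_measure \<equiv> density lborel std_normal_density"

lemma prob_space_std_normal_measure: "prob_space std_normal_measure"
  by (rule prob_space_normal_density) simp

lemma indicator_PiE_eq_prod:
  assumes "finite I" "\<omega> \<in> extensional I"
  shows "indicator (Pi\<^sub>E I A) \<omega> = (\<Prod>i\<in>I. indicator (A i) (\<omega> i) :: 'b::comm_semiring_1)"
proof (cases "\<omega> \<in> Pi\<^sub>E I A")
  case False
  then obtain i where "i \<in> I" "\<omega> i \<notin> A i"
    using assms(2) by (auto simp: PiE_def Pi_def)
  then have "(\<Prod>i\<in>I. indicator (A i) (\<omega> i) :: 'b) = 0"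
    using assms(1) by (intro prod_zero bexI) auto
  then show ?thesis
    using False by simp
qed (auto simp: PiE_def Pi_def)

lemma PiM_std_normal_measure:
  fixes I :: "'i set"
  assumes I: "finite I"
  shows "PiM I (\<lambda>_. std_normal_measure)
    = density (PiM I (\<lambda>_. lborel)) (\<lambda>\<omega>. \<Prod>i\<in>I. std_normal_density (\<omega> i))"
proof -
  interpret N: product_sigma_finite "\<lambda>_::'i. std_normal_measure"
    unfolding product_sigma_finite_def
    using prob_space_imp_sigma_finite[OF prob_space_std_normal_measure] by simp
  interpret L: product_sigma_finite "\<lambda>_::'i. lborel :: real measure"
    unfolding product_sigma_finite_def using sigma_finite_lborel by simp
  show ?thesis
  proof (rule N.PiM_eqI[OF I, symmetric])
    show "sets (density (PiM I (\<lambda>_. lborel)) (\<lambda>\<omega>. \<Prod>i\<in>I. std_normal_density (\<omega> i)))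
        = sets (PiM I (\<lambda>_. std_normal_measure))"
      by (simp cong: sets_PiM_cong)
  next
    fix A assume A: "\<And>i. i \<in> I \<Longrightarrow> A i \<in> sets std_normal_measure"
    have "emeasure (density (PiM I (\<lambda>_. lborel)) (\<lambda>\<omega>. \<Prod>i\<in>I. std_normal_density (\<omega> i))) (Pi\<^sub>E I A)
        = (\<integral>\<^sup>+ \<omega>. ennreal (\<Prod>i\<in>I. std_normal_density (\<omega> i)) * indicator (Pi\<^sub>E I A) \<omega>
            \<partial>PiM I (\<lambda>_. lborel))"
      using A by (intro emeasure_density sets_PiM_I_finite I) auto
    also have "\<dots> = (\<integral>\<^sup>+ \<omega>. (\<Prod>i\<in>I. ennreal (std_normal_density (\<omega> i) * indicator (A i) (\<omega> i)))
        \<partial>PiM I (\<lambda>_. lborel))"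
    proof (rule nn_integral_cong)
      fix \<omega> assume "\<omega> \<in> space (PiM I (\<lambda>_. lborel :: real measure))"
      then have "\<omega> \<in> extensional I"
        by (simp add: space_PiM PiE_def)
      then show "ennreal (\<Prod>i\<in>I. std_normal_density (\<omega> i)) * indicator (Pi\<^sub>E I A) \<omega>
          = (\<Prod>i\<in>I. ennreal (std_normal_density (\<omega> i) * indicator (A i) (\<omega> i)))"
        by (simp add: indicator_PiE_eq_prod[OF I] ennreal_mult' prod_ennreal[symmetric]
            prod.distrib prod_nonneg ennreal_indicator)
    qed
    also have "\<dots> = (\<Prod>i\<in>I. \<integral>\<^sup>+ x. ennreal (std_normal_density x * indicator (A i) x) \<partial>lborel)"
      by (rule L.product_nn_integral_prod[OF I]) (use A in measurable)
    also have "\<dots> = (\<Prod>i\<in>I. emeasure std_normal_measure (A i))"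
      using A by (intro prod.cong refl) (simp add: emeasure_density ennreal_mult' ennreal_indicator)
    finally show "emeasure (density (PiM I (\<lambda>_. lborel)) (\<lambda>\<omega>. \<Prod>i\<in>I. std_normal_density (\<omega> i)))
        (Pi\<^sub>E I A) = (\<Prod>i\<in>I. emeasure std_normal_measure (A i))" .
  qed
qed

lemma indep_vars_PiM_coordinates:
  assumes M: "\<And>i. i \<in> I \<Longrightarrow> prob_space (M i)" and "I \<noteq> {}"
  shows "prob_space.indep_vars (PiM I M) M (\<lambda>i \<omega>. \<omega> i) I"
proof -
  interpret P: prob_space "PiM I M"
    using M by (rule prob_space_PiM)
  have "distr (PiM I M) (PiM I M) (\<lambda>\<omega>. \<lambda>i\<in>I. \<omega> i) = distr (PiM I M) (PiM I M) (\<lambda>\<omega>. \<omega>)"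
    by (rule distr_cong) (auto simp: space_PiM)
  also have "\<dots> = PiM I M"
    by simp
  also have "\<dots> = PiM I (\<lambda>i. distr (PiM I M) (M i) (\<lambda>\<omega>. \<omega> i))"
    by (intro PiM_cong refl) (rule distr_PiM_component[OF M, symmetric])
  finally show ?thesis
    using \<open>I \<noteq> {}\<close> by (subst P.indep_vars_iff_distr_eq_PiM') auto
qed

lemma distributed_PiM_std_normal_component:
  assumes "i \<in> I"
  shows "distributed (PiM I (\<lambda>_. std_normal_measure)) lborel (\<lambda>\<omega>. \<omega> i) std_normal_density"
proof -
  have "distr (PiM I (\<lambda>_. std_normal_measure)) lborel (\<lambda>\<omega>. \<omega> i)
      = distr (PiM I (\<lambda>_. std_normal_measure)) std_normal_measure (\<lambda>\<omega>. \<omega> i)"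
    by (rule distr_cong) auto
  also have "\<dots> = std_normal_measure"
    using assms by (intro distr_PiM_component prob_space_std_normal_measure)
  finally show ?thesis
    using assms by (auto simp: distributed_def measurable_component_singleton)
qed

lemma std_gauss_density_sum_Basis:
  "std_gauss_density (\<Sum>b\<in>Basis. \<omega> b *\<^sub>R b :: 'a::euclidean_space)
     = (\<Prod>b\<in>Basis. std_normal_density (\<omega> b))"
proof -
  have norm_sq: "(norm (\<Sum>b\<in>Basis. \<omega> b *\<^sub>R b :: 'a))\<^sup>2 = (\<Sum>b\<in>Basis. (\<omega> b)\<^sup>2)"
    unfolding power2_norm_eq_inner by (subst euclidean_inner) (simp add: power2_eq_square)
  have const: "(2 * pi) powr (- real DIM('a) / 2) = (1 / sqrt (2 * pi)) ^ DIM('a)"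
  proof -
    have "(2 * pi) powr (- real DIM('a) / 2) = inverse (((2 * pi) powr (1 / 2)) powr real DIM('a))"
      by (simp add: powr_powr powr_minus)
    then show ?thesis
      by (simp add: powr_half_sqrt powr_realpow power_one_over inverse_eq_divide)
  qed
  have "(\<Prod>b\<in>Basis. std_normal_density (\<omega> b))
      = (\<Prod>b\<in>(Basis :: 'a set). 1 / sqrt (2 * pi) * exp (- (\<omega> b)\<^sup>2 / 2))"
    by (simp only: std_normal_density_def)
  also have "\<dots> = (1 / sqrt (2 * pi)) ^ DIM('a) * exp (\<Sum>b\<in>(Basis :: 'a set). - (\<omega> b)\<^sup>2 / 2)"
    by (simp only: prod.distrib prod_constant exp_sum[OF finite_Basis])
  also have "(\<Sum>b\<in>(Basis :: 'a set). - (\<omega> b)\<^sup>2 / 2) = - (\<Sum>b\<in>Basis. (\<omega> b)\<^sup>2) / 2"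
    by (simp add: sum_negf sum_divide_distrib)
  finally show ?thesis
    unfolding std_gauss_density_def norm_sq const by simp
qed

lemma integral_std_gauss_eq_PiM:
  fixes g :: "'a::euclidean_space \<Rightarrow> real"
  assumes [measurable]: "g \<in> borel_measurable borel"
  shows "(\<integral>x. g x * std_gauss_density x \<partial>lborel)
    = (\<integral>\<omega>. g (\<Sum>b\<in>Basis. \<omega> b *\<^sub>R b) \<partial>PiM Basis (\<lambda>_. std_normal_measure))"
proof -
  let ?S = "\<lambda>\<omega>. \<Sum>b\<in>Basis. \<omega> b *\<^sub>R b :: 'a"
  have "(\<integral>x. g x * std_gauss_density x \<partial>lborel)
      = (\<integral>\<omega>. g (?S \<omega>) * std_gauss_density (?S \<omega>) \<partial>PiM Basis (\<lambda>_. lborel))"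
    by (subst lborel_eq) (rule integral_distr, measurable, simp add: std_gauss_density_def)
  also have "\<dots> = (\<integral>\<omega>. (\<Prod>b\<in>Basis. std_normal_density (\<omega> b)) * g (?S \<omega>) \<partial>PiM Basis (\<lambda>_. lborel))"
    by (simp add: std_gauss_density_sum_Basis mult.commute)
  also have "\<dots> = (\<integral>\<omega>. g (?S \<omega>) \<partial>PiM Basis (\<lambda>_. std_normal_measure))"
    unfolding PiM_std_normal_measure[OF finite_Basis]
    by (rule integral_real_density[symmetric]) (auto simp: prod_nonneg)
  finally show ?thesis .
qed

lemma distributed_inner_sum_Basis:
  fixes u :: "'a::euclidean_space"
  assumes "u \<noteq> 0"
  shows "distributed (PiM Basis (\<lambda>_. std_normal_measure)) lborel
    (\<lambda>\<omega>. u \<bullet> (\<Sum>b\<in>Basis. \<omega> b *\<^sub>R b)) (normal_density 0 (norm u))"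
proof -
  let ?N = "PiM (Basis :: 'a set) (\<lambda>_. std_normal_measure)"
  interpret N: prob_space ?N
    by (intro prob_space_PiM prob_space_std_normal_measure)
  txt \<open>Coordinates orthogonal to \<open>u\<close> are dropped: \<open>sum_indep_normal\<close> needs positive variances.\<close>
  define I where "I = {b\<in>Basis. u \<bullet> b \<noteq> 0}"
  have I: "finite I" "I \<subseteq> Basis"
    by (auto simp: I_def)
  have "I \<noteq> {}"
    using assms euclidean_all_zero_iff[of u] by (auto simp: I_def inner_commute)
  have indep: "N.indep_vars (\<lambda>_. std_normal_measure) (\<lambda>b \<omega>. \<omega> b) Basis"
    by (intro indep_vars_PiM_coordinates prob_space_std_normal_measure) simp
  have "N.indep_vars (\<lambda>_. borel) (\<lambda>b \<omega>. (u \<bullet> b) * \<omega> b) I"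
    using N.indep_vars_compose2[OF N.indep_vars_subset[OF indep I(2)],
        of "\<lambda>b t. (u \<bullet> b) * t" "\<lambda>_. borel"]
    by simp
  moreover have "distributed ?N lborel (\<lambda>\<omega>. (u \<bullet> b) * \<omega> b) (normal_density 0 \<bar>u \<bullet> b\<bar>)"
    if "b \<in> I" for b
    using N.normal_density_affine[OF distributed_PiM_std_normal_component, of b "u \<bullet> b" 0] that I
    by (auto simp: I_def)
  ultimately have "distributed ?N lborel (\<lambda>\<omega>. \<Sum>b\<in>I. (u \<bullet> b) * \<omega> b)
      (normal_density (\<Sum>b\<in>I. 0) (sqrt (\<Sum>b\<in>I. \<bar>u \<bullet> b\<bar>\<^sup>2)))"
    using I(1) \<open>I \<noteq> {}\<close> by (intro N.sum_indep_normal) (auto simp: I_def)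
  moreover have "(\<Sum>b\<in>I. \<bar>u \<bullet> b\<bar>\<^sup>2) = (\<Sum>b\<in>Basis. (u \<bullet> b)\<^sup>2)"
    unfolding power2_abs by (rule sum.mono_neutral_left) (auto simp: I_def)
  moreover have "(\<Sum>b\<in>Basis. (u \<bullet> b)\<^sup>2) = (norm u)\<^sup>2"
    unfolding power2_norm_eq_inner by (subst euclidean_inner) (simp add: power2_eq_square)
  moreover have "u \<bullet> (\<Sum>b\<in>Basis. \<omega> b *\<^sub>R b) = (\<Sum>b\<in>I. (u \<bullet> b) * \<omega> b)" for \<omega>
  proof -
    have "u \<bullet> (\<Sum>b\<in>Basis. \<omega> b *\<^sub>R b) = (\<Sum>b\<in>Basis. (u \<bullet> b) * \<omega> b)"
      by (simp add: inner_sum_right mult.commute)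
    also have "\<dots> = (\<Sum>b\<in>I. (u \<bullet> b) * \<omega> b)"
      by (rule sum.mono_neutral_right) (auto simp: I_def)
    finally show ?thesis .
  qed
  ultimately show ?thesis
    by simp
qed

lemma integral_std_gauss_inner:
  fixes u :: "'a::euclidean_space" and g :: "real \<Rightarrow> real"
  assumes "u \<noteq> 0" and [measurable]: "g \<in> borel_measurable borel"
  shows "(\<integral>x. g (u \<bullet> x) * std_gauss_density x \<partial>lborel)
    = (\<integral>t. std_normal_density t * g (norm u * t) \<partial>lborel)"
proof -
  have "norm u > 0"
    using assms by simp
  have "(\<integral>x. g (u \<bullet> x) * std_gauss_density x \<partial>lborel)
      = (\<integral>t. normal_density 0 (norm u) t * g t \<partial>lborel)"
    unfolding integral_std_gauss_eq_PiM[of "\<lambda>x. g (u \<bullet> x)", simplified]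
    by (rule distributed_integral[OF distributed_inner_sum_Basis[OF assms(1)], symmetric])
       (simp_all add: normal_density_nonneg)
  also have "\<dots> = (\<integral>t. norm u * (normal_density 0 (norm u) (norm u * t) * g (norm u * t)) \<partial>lborel)"
    using lborel_integral_real_affine[of "norm u" "\<lambda>t. normal_density 0 (norm u) t * g t" 0]
      \<open>norm u > 0\<close> by simp
  also have "\<dots> = (\<integral>t. std_normal_density t * g (norm u * t) \<partial>lborel)"
    using \<open>norm u > 0\<close>
    by (intro Bochner_Integration.integral_cong refl)
       (simp add: normal_density_def real_sqrt_mult power_mult_distrib field_simps)
  finally show ?thesis .
qed

lemma G_support_eq: "G_support c u = norm u * lam ((u \<bullet> c) / norm u) / sqrt (2 * pi)"
proof (cases "u = 0")
  case False
  then have "norm u > 0"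
    by simp
  have "(\<integral>x. \<bar>u \<bullet> (c + x)\<bar> * std_gauss_density x \<partial>lborel)
      = (\<integral>t. std_normal_density t * \<bar>u \<bullet> c + norm u * t\<bar> \<partial>lborel)"
    using integral_std_gauss_inner[OF False, of "\<lambda>t. \<bar>u \<bullet> c + t\<bar>"] by (simp add: inner_add_right)
  also have "\<dots> = (\<integral>t. norm u * (std_normal_density t * \<bar>(u \<bullet> c) / norm u + t\<bar>) \<partial>lborel)"
    using \<open>norm u > 0\<close>
    by (intro Bochner_Integration.integral_cong refl)
       (simp add: abs_mult[symmetric] distrib_left field_simps)
  also have "\<dots> = norm u * (sqrt (2 / pi) * lam ((u \<bullet> c) / norm u))"
    by (simp add: integral_std_normal_abs_shift)
  finally have "G_support c u = norm u * lam ((u \<bullet> c) / norm u) * (sqrt (2 / pi) / 2)"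
    by (simp add: G_support_def)
  also have "sqrt (2 / pi) / 2 = 1 / sqrt (2 * pi)"
    by (simp add: real_sqrt_divide real_sqrt_mult divide_simps)
  finally show ?thesis
    by simp
qed (simp add: G_support_def)

section \<open>Volumes of ellipsoids\<close>

definition ellipsoid_map :: "real \<Rightarrow> real \<Rightarrow> 'a::real_inner \<Rightarrow> 'a \<Rightarrow> 'a" where
  "ellipsoid_map \<sigma> \<mu> c y = \<sigma> *\<^sub>R (y + (\<mu> * (y \<bullet> c)) *\<^sub>R c)"

lemma linear_ellipsoid_map: "linear (ellipsoid_map \<sigma> \<mu> c)"
  by (auto simp: ellipsoid_map_def linear_iff algebra_simps inner_add_left)

lemma ellipsoid_map_inner_commute: "ellipsoid_map \<sigma> \<mu> c x \<bullet> y = x \<bullet> ellipsoid_map \<sigma> \<mu> c y"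
  by (simp add: ellipsoid_map_def inner_add_left inner_add_right algebra_simps inner_commute)

lemma norm_ellipsoid_map_sq:
  "(norm (ellipsoid_map \<sigma> \<mu> c y))\<^sup>2
     = \<sigma>\<^sup>2 * ((norm y)\<^sup>2 + (2 * \<mu> + \<mu>\<^sup>2 * (norm c)\<^sup>2) * (y \<bullet> c)\<^sup>2)"
proof -
  have "(norm (y + (\<mu> * (y \<bullet> c)) *\<^sub>R c))\<^sup>2
      = (norm y)\<^sup>2 + (2 * \<mu> + \<mu>\<^sup>2 * (norm c)\<^sup>2) * (y \<bullet> c)\<^sup>2"
    unfolding power2_norm_eq_inner
    by (simp add: inner_add_left inner_add_right algebra_simps power2_eq_square inner_commute[of c y])
  then show ?thesis
    by (simp add: ellipsoid_map_def power_mult_distrib)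
qed

lemma surj_ellipsoid_map:
  fixes c :: "'a::euclidean_space"
  assumes "\<sigma> \<noteq> 0" "1 + \<mu> * (norm c)\<^sup>2 \<noteq> 0"
  shows "surj (ellipsoid_map \<sigma> \<mu> c)"
proof -
  have "y = 0" if "ellipsoid_map \<sigma> \<mu> c y = 0" for y
  proof -
    have y0: "y + (\<mu> * (y \<bullet> c)) *\<^sub>R c = 0"
      using that assms(1) by (simp add: ellipsoid_map_def)
    then have "(y + (\<mu> * (y \<bullet> c)) *\<^sub>R c) \<bullet> c = 0"
      by simp
    then have "(y \<bullet> c) * (1 + \<mu> * (norm c)\<^sup>2) = 0"
      by (simp add: inner_add_left power2_norm_eq_inner algebra_simps)
    with assms(2) y0 show "y = 0"
      by simp
  qed
  then show ?thesis
    using linear_ellipsoid_map linear_injective_imp_surjective linear_injective_0 by blast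
qed

lemma ellipsoid_map_orthogonal_conj:
  fixes c :: "real^'n"
  assumes R: "orthogonal_transformation R" "R (norm c *\<^sub>R axis k (1::real)) = c"
  shows "ellipsoid_map \<sigma> \<mu> c (R z)
    = R (\<chi> i. (\<sigma> * (if i = k then 1 + \<mu> * (norm c)\<^sup>2 else 1)) * z $ i)"
proof -
  have "linear R"
    using R(1) by (rule orthogonal_transformation_linear)
  have "R z \<bullet> R (norm c *\<^sub>R axis k 1) = z \<bullet> (norm c *\<^sub>R axis k 1)"
    using R(1) by (simp add: orthogonal_transformation_def)
  then have "R z \<bullet> c = norm c * (z $ k)"
    using R(2) by (simp add: inner_axis)
  moreover have "norm c *\<^sub>R R (axis k 1) = c"
    using R(2) \<open>linear R\<close> by (simp add: linear_scale)
  ultimately have "ellipsoid_map \<sigma> \<mu> c (R z)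
      = \<sigma> *\<^sub>R (R z + (\<mu> * norm c * (z $ k)) *\<^sub>R (norm c *\<^sub>R R (axis k 1)))"
    by (simp add: ellipsoid_map_def)
  also have "(\<chi> i. (\<sigma> * (if i = k then 1 + \<mu> * (norm c)\<^sup>2 else 1)) * z $ i)
      = \<sigma> *\<^sub>R (z + (\<mu> * (norm c)\<^sup>2 * (z $ k)) *\<^sub>R axis k 1)"
    by (auto simp: vec_eq_iff axis_def algebra_simps)
  then have "\<sigma> *\<^sub>R (R z + (\<mu> * norm c * (z $ k)) *\<^sub>R (norm c *\<^sub>R R (axis k 1)))
      = R (\<chi> i. (\<sigma> * (if i = k then 1 + \<mu> * (norm c)\<^sup>2 else 1)) * z $ i)"
    using \<open>linear R\<close> by (simp add: linear_add linear_scale power2_eq_square)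
  finally show ?thesis .
qed

lemma measure_ellipsoid_map_image_cart:
  fixes c :: "real^'n::{finite,wellorder}"
  assumes S: "S \<in> lmeasurable"
  shows "measure lebesgue (ellipsoid_map \<sigma> \<mu> c ` S)
    = \<bar>\<sigma> ^ CARD('n) * (1 + \<mu> * (norm c)\<^sup>2)\<bar> * measure lebesgue S"
proof -
  obtain k :: 'n where True
    by simp
  obtain R where R: "orthogonal_transformation R" "R (norm c *\<^sub>R axis k (1::real)) = c"
    using orthogonal_transformation_exists[of "norm c *\<^sub>R axis k (1::real)" c] by auto
  define m where "m i = \<sigma> * (if i = k then 1 + \<mu> * (norm c)\<^sup>2 else 1)" for i
  define D where "D y = (\<chi> i. m i * y $ i)" for y
  have "ellipsoid_map \<sigma> \<mu> c x = R (D (inv R x))" for x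
    using ellipsoid_map_orthogonal_conj[OF R, of \<sigma> \<mu> "inv R x"]
      surj_f_inv_f[OF orthogonal_transformation_surj[OF R(1)]]
    by (simp add: D_def m_def)
  then have "ellipsoid_map \<sigma> \<mu> c ` S = R ` D ` inv R ` S"
    by (simp add: image_image)
  have inv_S: "inv R ` S \<in> lmeasurable"
    using orthogonal_transformation_inv[OF R(1)] S by (rule measurable_orthogonal_image)
  have "measure lebesgue (R ` D ` inv R ` S) = measure lebesgue (D ` inv R ` S)"
    unfolding D_def by (intro measure_orthogonal_image R(1) measurable_stretch inv_S)
  also have "\<dots> = \<bar>prod m UNIV\<bar> * measure lebesgue (inv R ` S)"
    unfolding D_def by (rule measure_stretch[OF inv_S])
  also have "measure lebesgue (inv R ` S) = measure lebesgue S"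
    using orthogonal_transformation_inv[OF R(1)] S by (rule measure_orthogonal_image)
  also have "prod m UNIV = \<sigma> ^ CARD('n) * (1 + \<mu> * (norm c)\<^sup>2)"
    by (simp add: m_def prod.distrib)
  finally show ?thesis
    using \<open>ellipsoid_map \<sigma> \<mu> c ` S = R ` D ` inv R ` S\<close> by simp
qed

text \<open>The measure of orthogonal images and of diagonal stretches is known on \<open>real^'n\<close>; this index
  type of cardinality \<open>DIM('a)\<close> transports it to an arbitrary euclidean space.\<close>
typedef (overloaded) ('a::euclidean_space) dim_index = "{..<DIM('a)}"
  by (rule exI[of _ 0]) simp

instantiation dim_index :: (euclidean_space) linorder
begin
definition less_eq_dim_index :: "'a dim_index \<Rightarrow> 'a dim_index \<Rightarrow> bool" where
  "less_eq_dim_index x y \<longleftrightarrow> Rep_dim_index x \<le> Rep_dim_index y"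
definition less_dim_index :: "'a dim_index \<Rightarrow> 'a dim_index \<Rightarrow> bool" where
  "less_dim_index x y \<longleftrightarrow> Rep_dim_index x < Rep_dim_index y"
instance
  by standard (auto simp: less_eq_dim_index_def less_dim_index_def Rep_dim_index_inject)
end

instance dim_index :: (euclidean_space) finite
proof
  have "Rep_dim_index ` (UNIV :: 'a dim_index set) \<subseteq> {..<DIM('a)}"
    using Rep_dim_index by auto
  then have "finite (Rep_dim_index ` (UNIV :: 'a dim_index set))"
    using finite_subset by blast
  then show "finite (UNIV :: 'a dim_index set)"
    by (rule finite_imageD) (simp add: inj_on_def Rep_dim_index_inject)
qed

instance dim_index :: (euclidean_space) wellorder
proof
  fix P :: "'a dim_index \<Rightarrow> bool" and a
  assume step: "\<And>x. (\<And>y. y < x \<Longrightarrow> P y) \<Longrightarrow> P x"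
  show "P a"
    by (induct a rule: measure_induct_rule[of Rep_dim_index]) (rule step, simp add: less_dim_index_def)
qed

lemma card_dim_index: "CARD('a::euclidean_space dim_index) = DIM('a)"
  using type_definition.card[OF type_definition_dim_index] by simp

lemma inner_bij_Basis:
  assumes "bij_betw h UNIV (Basis :: 'a::euclidean_space set)"
  shows "h i \<bullet> h j = (if i = j then 1 else 0)"
proof -
  have "h i \<in> Basis" "h j \<in> Basis"
    using assms by (auto simp: bij_betw_def)
  then show ?thesis
    using assms by (auto simp: inner_Basis bij_betw_def inj_on_def)
qed

lemma inner_coords_bij_Basis:
  fixes h :: "'n::finite \<Rightarrow> 'a::euclidean_space"
  assumes "bij_betw h UNIV Basis"
  shows "(\<chi> i. x \<bullet> h i) \<bullet> (\<chi> i. y \<bullet> h i) = x \<bullet> y"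
  using sum.reindex_bij_betw[OF assms, of "\<lambda>b. (x \<bullet> b) * (y \<bullet> b)"]
  by (simp add: inner_vec_def euclidean_inner[of x y])

lemma measurable_coords:
  fixes h :: "'n::finite \<Rightarrow> 'a::euclidean_space"
  shows "(\<lambda>x. \<chi> i. x \<bullet> h i) \<in> borel_measurable borel"
  by (intro borel_measurable_continuous_onI continuous_on_vec_lambda continuous_intros)

lemma distr_lborel_coords_bij_Basis:
  fixes h :: "'n::finite \<Rightarrow> 'a::euclidean_space"
  assumes h: "bij_betw h UNIV Basis"
  shows "distr lborel borel (\<lambda>x. \<chi> i. x \<bullet> h i) = (lborel :: (real^'n) measure)"
proof (rule lborel_eqI[symmetric])
  fix l u :: "real^'n"
  assume "\<And>b. b \<in> Basis \<Longrightarrow> l \<bullet> b \<le> u \<bullet> b"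
  then have le: "l $ i \<le> u $ i" for i
    by (auto simp: Basis_vec_def cart_eq_inner_axis)
  define Ti where "Ti v = (\<Sum>i\<in>UNIV. v $ i *\<^sub>R h i)" for v :: "real^'n"
  have Ti_inner: "Ti v \<bullet> h i = v $ i" for v i
    by (simp add: Ti_def inner_sum_left inner_bij_Basis[OF h] if_distrib cong: if_cong)
  have Basis_eq: "Basis = range h"
    using h by (auto simp: bij_betw_def)
  have "(\<chi> i. x \<bullet> h i) \<in> box l u \<longleftrightarrow> (\<forall>i. l $ i < x \<bullet> h i \<and> x \<bullet> h i < u $ i)" for x
    by (simp add: mem_box_cart)
  moreover have "x \<in> box (Ti l) (Ti u) \<longleftrightarrow> (\<forall>i. l $ i < x \<bullet> h i \<and> x \<bullet> h i < u $ i)" for x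
    by (simp add: mem_box Basis_eq Ti_inner)
  ultimately have "(\<lambda>x. \<chi> i. x \<bullet> h i) -` box l u = box (Ti l) (Ti u)"
    by blast
  then have "emeasure (distr lborel borel (\<lambda>x. \<chi> i. x \<bullet> h i)) (box l u)
      = emeasure lborel (box (Ti l) (Ti u))"
    by (subst emeasure_distr) (auto intro: measurable_coords)
  also have "\<dots> = (\<Prod>b\<in>Basis. (Ti u - Ti l) \<bullet> b)"
    using le by (intro emeasure_lborel_box) (auto simp: Basis_eq Ti_inner)
  also have "\<dots> = (\<Prod>i\<in>UNIV. u $ i - l $ i)"
    using prod.reindex_bij_betw[OF h, of "\<lambda>b. (Ti u - Ti l) \<bullet> b"]
    by (simp add: inner_diff_left Ti_inner)
  also have "\<dots> = (\<Prod>b\<in>Basis. (u - l) \<bullet> b)"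
    by (simp add: Basis_vec_def cart_eq_inner_axis axis_eq_axis prod.UNION_disjoint inner_diff_left)
  finally show "emeasure (distr lborel borel (\<lambda>x. \<chi> i. x \<bullet> h i)) (box l u)
      = (\<Prod>b\<in>Basis. (u - l) \<bullet> b)" .
qed simp

lemma measure_coords_bij_Basis_image:
  fixes h :: "'n::finite \<Rightarrow> 'a::euclidean_space"
  assumes h: "bij_betw h UNIV Basis" and A: "A \<in> sets borel"
  shows "measure lborel ((\<lambda>x. \<chi> i. x \<bullet> h i) ` A) = measure lborel A"
proof -
  let ?T = "\<lambda>x. \<chi> i. x \<bullet> h i"
  define Ti where "Ti v = (\<Sum>i\<in>UNIV. v $ i *\<^sub>R h i)" for v :: "real^'n"
  have "Ti (?T x) = x" for x
    using sum.reindex_bij_betw[OF h, of "\<lambda>b. (x \<bullet> b) *\<^sub>R b"]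
    by (simp add: Ti_def euclidean_representation)
  moreover have "?T (Ti v) = v" for v
    by (simp add: Ti_def vec_eq_iff inner_sum_left inner_bij_Basis[OF h] if_distrib cong: if_cong)
  ultimately have "?T ` A = Ti -` A" and "?T -` ?T ` A = A"
    by (auto simp: image_iff) metis+
  moreover have Ti_meas: "Ti \<in> borel_measurable borel"
    unfolding Ti_def by measurable
  moreover have "Ti -` A \<in> sets borel"
    using measurable_sets[OF Ti_meas A] by simp
  ultimately show ?thesis
    using A measure_distr[of ?T lborel borel "?T ` A"]
    by (simp add: distr_lborel_coords_bij_Basis[OF h] measurable_coords)
qed

lemma measure_ellipsoid_map_image:
  fixes c :: "'a::euclidean_space"
  assumes "compact S"
  shows "measure lborel (ellipsoid_map \<sigma> \<mu> c ` S)
    = \<bar>\<sigma> ^ DIM('a) * (1 + \<mu> * (norm c)\<^sup>2)\<bar> * measure lborel S"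
proof -
  obtain h :: "'a dim_index \<Rightarrow> 'a" where h: "bij_betw h UNIV Basis"
    using finite_same_card_bij[of "UNIV :: 'a dim_index set" "Basis :: 'a set"]
    by (auto simp: card_dim_index)
  define T where "T x = (\<chi> i. x \<bullet> h i)" for x
  have "linear T"
    by (auto simp: T_def linear_iff vec_eq_iff inner_add_left)
  have inner_T: "T x \<bullet> T y = x \<bullet> y" for x y
    unfolding T_def by (rule inner_coords_bij_Basis[OF h])
  then have norm_T: "norm (T x) = norm x" for x
    by (simp add: norm_eq_sqrt_inner)
  have image_T: "T ` ellipsoid_map \<sigma> \<mu> c ` S = ellipsoid_map \<sigma> \<mu> (T c) ` T ` S"
    using \<open>linear T\<close>
    by (simp add: image_image ellipsoid_map_def linear_add linear_scale inner_T)
  have "compact (T ` S)" "compact (ellipsoid_map \<sigma> \<mu> c ` S)"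
    using assms \<open>linear T\<close> linear_ellipsoid_map[of \<sigma> \<mu> c]
    by (auto intro!: compact_continuous_image linear_continuous_on simp: linear_linear)
  moreover have "compact (ellipsoid_map \<sigma> \<mu> (T c) ` T ` S)"
    using \<open>compact (T ` S)\<close> linear_ellipsoid_map[of \<sigma> \<mu> "T c"]
    by (auto intro!: compact_continuous_image linear_continuous_on simp: linear_linear)
  ultimately have "measure lborel (ellipsoid_map \<sigma> \<mu> c ` S)
      = measure lebesgue (ellipsoid_map \<sigma> \<mu> (T c) ` T ` S)"
    using measure_coords_bij_Basis_image[OF h, of "ellipsoid_map \<sigma> \<mu> c ` S"] image_T
    by (simp add: T_def[abs_def] compact_imp_closed measure_completion borel_closed)
  also have "\<dots> = \<bar>\<sigma> ^ DIM('a) * (1 + \<mu> * (norm c)\<^sup>2)\<bar> * measure lebesgue (T ` S)"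
    using \<open>compact (T ` S)\<close>
    by (simp add: measure_ellipsoid_map_image_cart lmeasurable_compact card_dim_index norm_T)
  also have "measure lebesgue (T ` S) = measure lborel S"
    using measure_coords_bij_Basis_image[OF h, of S] \<open>compact (T ` S)\<close> assms
    by (simp add: T_def[abs_def] compact_imp_closed measure_completion borel_closed)
  finally show ?thesis .
qed

section \<open>The Gaussian zonoid\<close>

lemma self_adjoint_image_cball_subset:
  fixes L :: "'a::real_inner \<Rightarrow> 'a"
  assumes "\<And>x y. L x \<bullet> y = x \<bullet> L y" and "\<And>u. norm (L u) \<le> h u"
  shows "L ` cball 0 1 \<subseteq> {x. \<forall>u. u \<bullet> x \<le> h u}"
proof clarify
  fix y u :: 'a
  assume "y \<in> cball 0 1"
  then have "u \<bullet> L y \<le> norm (L u)"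
    using norm_cauchy_schwarz[of "L u" y] mult_left_le[of "norm y" "norm (L u)"]
    by (simp add: assms(1))
  then show "u \<bullet> L y \<le> h u"
    using assms(2)[of u] by linarith
qed

lemma subset_self_adjoint_image_cball:
  fixes L :: "'a::real_inner \<Rightarrow> 'a"
  assumes "\<And>x y. L x \<bullet> y = x \<bullet> L y" and "surj L" and "\<And>u. h u \<le> norm (L u)"
  shows "{x. \<forall>u. u \<bullet> x \<le> h u} \<subseteq> L ` cball 0 1"
proof clarify
  fix x :: 'a
  assume x: "\<forall>u. u \<bullet> x \<le> h u"
  obtain y v where y: "x = L y" and v: "y = L v"
    using \<open>surj L\<close> by (metis surjD)
  have "(norm y)\<^sup>2 = v \<bullet> x"
    by (simp add: y v assms(1) power2_norm_eq_inner)
  also have "\<dots> \<le> norm y"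
    using x[rule_format, of v] assms(3)[of v] v by simp
  finally have "norm y * norm y \<le> 1 * norm y"
    by (simp add: power2_eq_square)
  then have "norm y \<le> 1"
    by (cases "norm y = 0") (auto simp: mult_le_cancel_right)
  with y show "x \<in> L ` cball 0 1"
    by auto
qed

text \<open>The coefficient makes \<open>1 + \<mu> * (norm c)\<^sup>2 = lam (norm c)\<close> and
  \<open>2 * \<mu> + \<mu>\<^sup>2 * (norm c)\<^sup>2 = lam_growth (norm c)\<close>; for \<open>c = 0\<close> both hold through \<open>x / 0 = 0\<close>.\<close>
definition G_ellipsoid_map :: "real \<Rightarrow> 'a::real_inner \<Rightarrow> 'a \<Rightarrow> 'a" where
  "G_ellipsoid_map \<sigma> c = ellipsoid_map (\<sigma> / sqrt (2 * pi)) ((lam (norm c) - 1) / (norm c)\<^sup>2) c"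

lemma norm_G_ellipsoid_map_sq:
  "(norm (G_ellipsoid_map \<sigma> c v))\<^sup>2
     = \<sigma>\<^sup>2 * (norm v)\<^sup>2 * (1 + lam_growth (norm c) * ((v \<bullet> c) / norm v)\<^sup>2) / (2 * pi)"
proof -
  define \<mu> where "\<mu> = (lam (norm c) - 1) / (norm c)\<^sup>2"
  have "2 * \<mu> + \<mu>\<^sup>2 * (norm c)\<^sup>2 = lam_growth (norm c)"
  proof (cases "c = 0")
    case False
    then have "lam (norm c) = 1 + \<mu> * (norm c)\<^sup>2"
      by (simp add: \<mu>_def)
    with False show ?thesis
      by (simp add: lam_growth_def field_simps power2_eq_square)
  qed (simp add: \<mu>_def lam_growth_def)
  moreover have "(norm v)\<^sup>2 + k * (v \<bullet> c)\<^sup>2 = (norm v)\<^sup>2 * (1 + k * ((v \<bullet> c) / norm v)\<^sup>2)" for k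
    by (cases "v = 0") (simp_all add: field_simps power_divide)
  ultimately show ?thesis
    by (simp add: G_ellipsoid_map_def norm_ellipsoid_map_sq \<mu>_def[symmetric] power_divide)
qed

lemma G_support_sq:
  "(G_support c v)\<^sup>2 = (norm v)\<^sup>2 * (lam ((v \<bullet> c) / norm v))\<^sup>2 / (2 * pi)"
  by (simp add: G_support_eq power_mult_distrib power_divide)

lemma G_support_nonneg: "0 \<le> G_support c v"
  unfolding G_support_eq using lam_pos
  by (intro divide_nonneg_pos mult_nonneg_nonneg) (auto intro: less_imp_le)

lemma G_support_le_norm_G_ellipsoid_map:
  fixes c :: "'a::euclidean_space"
  shows "G_support c v \<le> norm (G_ellipsoid_map 1 c v)"
proof (rule power2_le_imp_le)
  have "\<bar>(v \<bullet> c) / norm v\<bar> \<le> norm c"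
    using Cauchy_Schwarz_ineq2[of v c]
    by (cases "v = 0") (simp_all add: abs_div divide_le_eq mult.commute)
  then have "(lam ((v \<bullet> c) / norm v))\<^sup>2 \<le> 1 + lam_growth (norm c) * ((v \<bullet> c) / norm v)\<^sup>2"
    by (rule lam_sq_le_lam_growth)
  then show "(G_support c v)\<^sup>2 \<le> (norm (G_ellipsoid_map 1 c v))\<^sup>2"
    by (simp add: G_support_sq norm_G_ellipsoid_map_sq divide_right_mono mult_left_mono)
qed simp

lemma norm_G_ellipsoid_map_le_G_support:
  "norm (G_ellipsoid_map b_inf c v) \<le> G_support c v"
proof (rule power2_le_imp_le)
  show "(norm (G_ellipsoid_map b_inf c v))\<^sup>2 \<le> (G_support c v)\<^sup>2"
    unfolding G_support_sq norm_G_ellipsoid_map_sq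
    using b_inf_sq_mult_le_lam_sq[of "norm c" "(v \<bullet> c) / norm v"]
    by (simp add: mult.assoc mult.left_commute[of "b_inf\<^sup>2"] divide_right_mono mult_left_mono)
qed (rule G_support_nonneg)

lemma G_ellipsoid_map_inner_commute:
  "G_ellipsoid_map \<sigma> c x \<bullet> y = x \<bullet> G_ellipsoid_map \<sigma> c y"
  by (simp add: G_ellipsoid_map_def ellipsoid_map_inner_commute)

lemma G_zonoid_subset_G_ellipsoid:
  fixes c :: "'a::euclidean_space"
  shows "G_zonoid c \<subseteq> G_ellipsoid_map 1 c ` cball 0 1"
proof -
  have "surj (G_ellipsoid_map 1 c)"
    unfolding G_ellipsoid_map_def
    using lam_pos[of "norm c"] by (cases "c = 0") (auto intro!: surj_ellipsoid_map)
  then show ?thesis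
    unfolding G_zonoid_def
    by (intro subset_self_adjoint_image_cball G_ellipsoid_map_inner_commute
        G_support_le_norm_G_ellipsoid_map)
qed

lemma G_ellipsoid_subset_G_zonoid: "G_ellipsoid_map b_inf c ` cball 0 1 \<subseteq> G_zonoid c"
  unfolding G_zonoid_def
  by (intro self_adjoint_image_cball_subset G_ellipsoid_map_inner_commute
      norm_G_ellipsoid_map_le_G_support)

lemma compact_G_ellipsoid:
  fixes c :: "'a::euclidean_space"
  shows "compact (G_ellipsoid_map \<sigma> c ` cball 0 1)"
  unfolding G_ellipsoid_map_def
  by (intro compact_continuous_image linear_continuous_on compact_cball)
     (simp add: linear_linear linear_ellipsoid_map)

lemma compact_G_zonoid:
  fixes c :: "'a::euclidean_space"
  shows "compact (G_zonoid c)"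
proof -
  have "G_zonoid c = (\<Inter>u. {x. u \<bullet> x \<le> G_support c u})"
    by (auto simp: G_zonoid_def)
  then have "closed (G_zonoid c)"
    by (auto intro!: closed_INT closed_Collect_le continuous_intros)
  then show ?thesis
    using bounded_subset[OF compact_imp_bounded[OF compact_G_ellipsoid] G_zonoid_subset_G_ellipsoid]
    by (simp add: compact_eq_bounded_closed)
qed

lemma measure_G_ellipsoid:
  fixes c :: "'a::euclidean_space"
  assumes "0 \<le> \<sigma>"
  shows "measure lborel (G_ellipsoid_map \<sigma> c ` cball 0 1)
    = \<sigma> ^ DIM('a) * (lam (norm c) / (2 * pi) powr (real DIM('a) / 2))
        * measure lborel (cball (0::'a) 1)"
proof -
  have "1 + (lam (norm c) - 1) / (norm c)\<^sup>2 * (norm c)\<^sup>2 = lam (norm c)"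
    by (cases "c = 0") simp_all
  moreover have "(\<sigma> / sqrt (2 * pi)) ^ DIM('a) = \<sigma> ^ DIM('a) / (2 * pi) powr (real DIM('a) / 2)"
    by (simp add: power_divide powr_half_sqrt[symmetric] powr_powr powr_realpow[symmetric])
  ultimately show ?thesis
    using assms lam_pos[of "norm c"]
    by (simp add: G_ellipsoid_map_def measure_ellipsoid_map_image abs_mult)
qed

theorem corollary2p11:
  fixes c :: "'a::euclidean_space"
  defines "m \<equiv> DIM('a)"
  defines "\<kappa> \<equiv> measure lborel (ball (0::'a) 1)"
  shows "b_inf ^ m * (lam (norm c) / (2 * pi) powr (real m / 2)) * \<kappa> \<le> measure lborel (G_zonoid c)
       \<and> measure lborel (G_zonoid c) \<le> lam (norm c) / (2 * pi) powr (real m / 2) * \<kappa>"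
proof
  have \<kappa>: "\<kappa> = measure lborel (cball (0::'a) 1)"
    by (simp add: \<kappa>_def content_ball content_cball)
  have "measure lborel (G_ellipsoid_map b_inf c ` cball 0 1) \<le> measure lborel (G_zonoid c)"
    by (intro measure_mono_fmeasurable G_ellipsoid_subset_G_zonoid fmeasurable_compact
        compact_G_zonoid) (simp add: borel_compact compact_G_ellipsoid)
  then show "b_inf ^ m * (lam (norm c) / (2 * pi) powr (real m / 2)) * \<kappa> \<le> measure lborel (G_zonoid c)"
    by (simp add: measure_G_ellipsoid b_inf_nonneg m_def \<kappa>)
  have "measure lborel (G_zonoid c) \<le> measure lborel (G_ellipsoid_map 1 c ` cball 0 1)"
    by (intro measure_mono_fmeasurable G_zonoid_subset_G_ellipsoid fmeasurable_compact
        compact_G_ellipsoid) (simp add: borel_compact compact_G_zonoid)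
  then show "measure lborel (G_zonoid c) \<le> lam (norm c) / (2 * pi) powr (real m / 2) * \<kappa>"
    by (simp add: measure_G_ellipsoid m_def \<kappa>)
qed

end
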